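(* Assume $\rho_\alpha^{\mathrm{dir}}<1$, let $\theta^\star$ be the unique projected Bellman fixed point, and let $x_k:=\theta_k-\theta^\star$. Fix $\varepsilon>0$ with $\beta_\varepsilon:=\rho_\alpha^{\mathrm{dir}}+\varepsilon<1$, and let $p_\varepsilon$ and $C_\varepsilon$ be as described in the context. Then for every $k\ge0$, \[ \mathbb E[p_\varepsilon(w_k)\mid\mathcal F_k]\le2\sqrt{C_\varepsilon}\,\phi_{\max}\big(R_{\max}+(1+\gamma)\|\Phi\theta^\star\|_\infty\big)+2\sqrt{C_\varepsilon}(1+\gamma)\phi_{\max}^2\,p_\varepsilon(x_k). \]
   Context: Consider a finite discounted MDP with state space $\mathcal S=\{1,\dots,|\mathcal S|\}$, action space $\mathcal A=\{1,\dots,|\mathcal A|\}$, transition probabilities $P(s'\mid s,a)$, real rewards $r(s,a,s')$, expected reward $R(s,a)=\sum_{s'}P(s'\mid s,a)r(s,a,s')$, and discount factor $\gamma\in(0,1)$. Let $R_{\max}:=\max|r(s,a,s')|$. State-action vectors are ordered as $(1,1),(2,1),\dots,(|\mathcal S|,1),(1,2),\dots$. The matrix $P$ has rows $P(\cdot\mid s,a)$, and $R$ has entries $R(s,a)$. The set $\Theta$ is the set of deterministic stationary policies $\pi:\mathcal S\to\mathcal A$. For $\pi\in\Theta$, $\Pi^\pi$ has entry $1$ at row $s$, column $(s,\pi(s))$, and zeros elsewhere. The feature matrix $\Phi$ has full column rank and rows $\phi(s,a)^\top$. Let $\phi_{\max}:=\max\|\phi(s,a)\|_2$, and define $V_\theta(s):=\max_a\phi(s,a)^\top\theta$.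 The distribution $d>0$ on $\mathcal S\times\mathcal A$ gives $D=\mathrm{diag}(d)$. The step size is $\alpha\in(0,1)$. Define $g(\theta):=\Phi^\top D(R+\gamma PV_\theta-\Phi\theta)$; a projected Bellman fixed point is a $\theta^\star$ with $g(\theta^\star)=0$. Define $A_\pi:=I-\alpha\Phi^\top D\Phi+\alpha\gamma\Phi^\top DP\Pi^\pi\Phi$, and let $\rho_\alpha^{\mathrm{dir}}$ be the joint spectral radius $\lim_k\max_{\pi_i\in\Theta}\|A_{\pi_k}\cdots A_{\pi_1}\|^{1/k}$. When $\rho_\alpha^{\mathrm{dir}}<1$, a unique projected Bellman fixed point exists. Lyapunov norm: define \[ V_\varepsilon^\infty(x):=\lim_{t\to\infty}\sum_{\ell=0}^t\beta_\varepsilon^{-2\ell}\max_{\pi_1,\dots,\pi_\ell\in\Theta}\|A_{\pi_\ell}\cdots A_{\pi_1}x\|_2^2, \] where the $\ell=0$ term is $\|x\|_2^2$, and $p_\varepsilon:=\sqrt{V_\varepsilon^\infty}$ (a norm). Let $C_\varepsilon\ge1$ satisfy $\|x\|_2^2\le V^\infty_\varepsilon(x)\le C_\varepsilon\|x\|_2^2$ for all $x$. i.i.d. sampling: $\theta_0$ is deterministic. At each time $k$, $(s_k,a_k)$ is drawn i.i.d. from $d$, $s'_k\sim P(\cdot\mid s_k,a_k)$, and $r_{k+1}=r(s_k,a_k,s'_k)$. The filtration is $\mathcal F_0=\sigma(\theta_0)$ and $\mathcal F_k=\sigma(\theta_0,\{(s_t,a_t,s'_t,r_{t+1}):t\le k-1\})$.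 Define $\widehat g_k(\theta):=\phi(s_k,a_k)(r_{k+1}+\gamma\max_u\phi(s'_k,u)^\top\theta-\phi(s_k,a_k)^\top\theta)$, the update $\theta_{k+1}=\theta_k+\alpha\widehat g_k(\theta_k)$, and $w_k:=\widehat g_k(\theta_k)-g(\theta_k)$. *)

theory Defs
  imports "HOL-Analysis.Analysis" "HOL-Probability.Probability"
begin

text \<open>States: finite type 's; actions: finite type 'a; features: real^'n.
  P s a s' = P(s'|s,a); r s a s' reward; d s a sampling distribution;
  phi s a = feature vector phi(s,a).\<close>

definition Vtheta :: "('s \<Rightarrow> 'a::finite \<Rightarrow> real^'n) \<Rightarrow> real^'n \<Rightarrow> 's \<Rightarrow> real" where
  "Vtheta phi \<theta> s = Max (range (\<lambda>a. phi s a \<bullet> \<theta>))"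

definition Rexp :: "('s::finite \<Rightarrow> 'a \<Rightarrow> 's \<Rightarrow> real) \<Rightarrow> ('s \<Rightarrow> 'a \<Rightarrow> 's \<Rightarrow> real) \<Rightarrow> 's \<Rightarrow> 'a \<Rightarrow> real" where
  "Rexp P r s a = (\<Sum>s'\<in>UNIV. P s a s' * r s a s')"

text \<open>g(theta) = Phi^T D (R + gamma P V_theta - Phi theta)\<close>
definition gbar :: "('s::finite \<Rightarrow> 'a::finite \<Rightarrow> 's \<Rightarrow> real) \<Rightarrow> ('s \<Rightarrow> 'a \<Rightarrow> 's \<Rightarrow> real) \<Rightarrow> ('s \<Rightarrow> 'a \<Rightarrow> real)
    \<Rightarrow> ('s \<Rightarrow> 'a \<Rightarrow> real^'n) \<Rightarrow> real \<Rightarrow> real^'n \<Rightarrow> real^'n" where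
  "gbar P r d phi \<gamma> \<theta> = (\<Sum>s\<in>UNIV. \<Sum>a\<in>UNIV.
      (d s a * (Rexp P r s a + \<gamma> * (\<Sum>s'\<in>UNIV. P s a s' * Vtheta phi \<theta> s') - phi s a \<bullet> \<theta>)) *\<^sub>R phi s a)"

text \<open>A_pi x = (I - alpha Phi^T D Phi + alpha gamma Phi^T D P Pi^pi Phi) x\<close>
definition Aop :: "('s::finite \<Rightarrow> 'a::finite \<Rightarrow> 's \<Rightarrow> real) \<Rightarrow> ('s \<Rightarrow> 'a \<Rightarrow> real)
    \<Rightarrow> ('s \<Rightarrow> 'a \<Rightarrow> real^'n) \<Rightarrow> real \<Rightarrow> real \<Rightarrow> ('s \<Rightarrow> 'a) \<Rightarrow> real^'n \<Rightarrow> real^'n" where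
  "Aop P d phi \<alpha> \<gamma> \<pi> x = x
     - \<alpha> *\<^sub>R (\<Sum>s\<in>UNIV. \<Sum>a\<in>UNIV. (d s a * (phi s a \<bullet> x)) *\<^sub>R phi s a)
     + (\<alpha> * \<gamma>) *\<^sub>R (\<Sum>s\<in>UNIV. \<Sum>a\<in>UNIV.
          (d s a * (\<Sum>s'\<in>UNIV. P s a s' * (phi s' (\<pi> s') \<bullet> x))) *\<^sub>R phi s a)"

text \<open>Aprod [pi_1,...,pi_k] = A_{pi_k} ... A_{pi_1} (pi_1 applied first).\<close>
definition Aprod :: "('s::finite \<Rightarrow> 'a::finite \<Rightarrow> 's \<Rightarrow> real) \<Rightarrow> ('s \<Rightarrow> 'a \<Rightarrow> real)
    \<Rightarrow> ('s \<Rightarrow> 'a \<Rightarrow> real^'n) \<Rightarrow> real \<Rightarrow> real \<Rightarrow> ('s \<Rightarrow> 'a) list \<Rightarrow> real^'n \<Rightarrow> real^'n" where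
  "Aprod P d phi \<alpha> \<gamma> ps x = fold (\<lambda>\<pi> y. Aop P d phi \<alpha> \<gamma> \<pi> y) ps x"

definition rho_dir :: "('s::finite \<Rightarrow> 'a::finite \<Rightarrow> 's \<Rightarrow> real) \<Rightarrow> ('s \<Rightarrow> 'a \<Rightarrow> real)
    \<Rightarrow> ('s \<Rightarrow> 'a \<Rightarrow> real^'n) \<Rightarrow> real \<Rightarrow> real \<Rightarrow> real" where
  "rho_dir P d phi \<alpha> \<gamma> = lim (\<lambda>k. Max {onorm (Aprod P d phi \<alpha> \<gamma> ps) powr (1 / real k) | ps. length ps = k})"

definition Vinf :: "('s::finite \<Rightarrow> 'a::finite \<Rightarrow> 's \<Rightarrow> real) \<Rightarrow> ('s \<Rightarrow> 'a \<Rightarrow> real)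
    \<Rightarrow> ('s \<Rightarrow> 'a \<Rightarrow> real^'n) \<Rightarrow> real \<Rightarrow> real \<Rightarrow> real \<Rightarrow> real^'n \<Rightarrow> real" where
  "Vinf P d phi \<alpha> \<gamma> \<beta> x = lim (\<lambda>t. \<Sum>l\<le>t. inverse \<beta> ^ (2 * l) *
       Max {(norm (Aprod P d phi \<alpha> \<gamma> ps x))\<^sup>2 | ps. length ps = l})"

definition pnorm :: "('s::finite \<Rightarrow> 'a::finite \<Rightarrow> 's \<Rightarrow> real) \<Rightarrow> ('s \<Rightarrow> 'a \<Rightarrow> real)
    \<Rightarrow> ('s \<Rightarrow> 'a \<Rightarrow> real^'n) \<Rightarrow> real \<Rightarrow> real \<Rightarrow> real \<Rightarrow> real^'n \<Rightarrow> real" where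
  "pnorm P d phi \<alpha> \<gamma> \<beta> x = sqrt (Vinf P d phi \<alpha> \<gamma> \<beta> x)"

definition Rmax :: "('s::finite \<Rightarrow> 'a::finite \<Rightarrow> 's \<Rightarrow> real) \<Rightarrow> real" where
  "Rmax r = Max {\<bar>r s a s'\<bar> | s a s'. True}"

definition phimax :: "('s::finite \<Rightarrow> 'a::finite \<Rightarrow> real^'n) \<Rightarrow> real" where
  "phimax phi = Max {norm (phi s a) | s a. True}"

definition Phi_inf :: "('s::finite \<Rightarrow> 'a::finite \<Rightarrow> real^'n) \<Rightarrow> real^'n \<Rightarrow> real" where
  "Phi_inf phi \<theta> = Max {\<bar>phi s a \<bullet> \<theta>\<bar> | s a. True}"

definition ghat :: "('s \<Rightarrow> 'a \<Rightarrow> 's \<Rightarrow> real) \<Rightarrow> ('s \<Rightarrow> 'a::finite \<Rightarrow> real^'n) \<Rightarrow> real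
    \<Rightarrow> 's \<Rightarrow> 'a \<Rightarrow> 's \<Rightarrow> real^'n \<Rightarrow> real^'n" where
  "ghat r phi \<gamma> s a s' \<theta> = (r s a s' + \<gamma> * Vtheta phi \<theta> s' - phi s a \<bullet> \<theta>) *\<^sub>R phi s a"

primrec theta_it :: "('s \<Rightarrow> 'a \<Rightarrow> 's \<Rightarrow> real) \<Rightarrow> ('s \<Rightarrow> 'a::finite \<Rightarrow> real^'n) \<Rightarrow> real \<Rightarrow> real
    \<Rightarrow> real^'n \<Rightarrow> (nat \<Rightarrow> 'm \<Rightarrow> 's) \<Rightarrow> (nat \<Rightarrow> 'm \<Rightarrow> 'a) \<Rightarrow> (nat \<Rightarrow> 'm \<Rightarrow> 's) \<Rightarrow> nat \<Rightarrow> 'm \<Rightarrow> real^'n" where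
  "theta_it r phi \<alpha> \<gamma> \<theta>0 S Ac S' 0 \<omega> = \<theta>0"
| "theta_it r phi \<alpha> \<gamma> \<theta>0 S Ac S' (Suc k) \<omega> =
     theta_it r phi \<alpha> \<gamma> \<theta>0 S Ac S' k \<omega>
     + \<alpha> *\<^sub>R ghat r phi \<gamma> (S k \<omega>) (Ac k \<omega>) (S' k \<omega>) (theta_it r phi \<alpha> \<gamma> \<theta>0 S Ac S' k \<omega>)"

text \<open>Filtration F_k generated by the samples (s_t,a_t,s'_t), t < k
  (r_{t+1} is a function of them; theta_0 is deterministic).\<close>
definition filt :: "'m measure \<Rightarrow> (nat \<Rightarrow> 'm \<Rightarrow> 's) \<Rightarrow> (nat \<Rightarrow> 'm \<Rightarrow> 'a) \<Rightarrow> (nat \<Rightarrow> 'm \<Rightarrow> 's) \<Rightarrow> nat \<Rightarrow> 'm measure" where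
  "filt M S Ac S' k = sigma (space M)
     (\<Union>t\<in>{..<k}. {(\<lambda>\<omega>. (S t \<omega>, Ac t \<omega>, S' t \<omega>)) -` B \<inter> space M | B. True})"

end

theory Submission imports Defs begin

text \<open>The bound holds pointwise, before conditioning. Since \<open>V\<^sub>\<theta>\<close> and \<open>\<Phi>\<theta>\<close> differ from
  their values at \<open>\<theta>\<^sup>\<star>\<close> by at most \<open>\<phi>\<^sub>m\<^sub>a\<^sub>x \<parallel>\<theta> - \<theta>\<^sup>\<star>\<parallel>\<close>, every sampled direction, and
  hence also its mean \<open>g(\<theta>)\<close>, has Euclidean norm at most
  \<open>\<phi>\<^sub>m\<^sub>a\<^sub>x (R\<^sub>m\<^sub>a\<^sub>x + (1 + \<gamma>) (\<parallel>\<Phi>\<theta>\<^sup>\<star>\<parallel>\<^sub>\<infinity> + \<phi>\<^sub>m\<^sub>a\<^sub>x \<parallel>\<theta> - \<theta>\<^sup>\<star>\<parallel>))\<close>.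
  The comparison \<open>\<parallel>x\<parallel> \<le> p\<^sub>\<epsilon>(x) \<le> \<surd>C\<^sub>\<epsilon> \<parallel>x\<parallel>\<close> transfers this to \<open>p\<^sub>\<epsilon>(w\<^sub>k)\<close>.
  Conditioning on the sigma-algebra of the first \<open>k\<close> samples preserves the bound because its
  right-hand side is measurable for it: \<open>\<theta>\<^sub>k\<close> is a function of these samples, which take only
  finitely many values.\<close>

lemma norm_le_phimax: "norm (phi s a) \<le> phimax (phi :: 's::finite \<Rightarrow> 'a::finite \<Rightarrow> real^'n)"
  unfolding phimax_def
  by (rule Max_ge[OF finite_subset[where B = "range (\<lambda>(s, a). norm (phi s a))"]]) auto

lemma abs_le_Rmax: "\<bar>r s a s'\<bar> \<le> Rmax (r :: 's::finite \<Rightarrow> 'a::finite \<Rightarrow> 's \<Rightarrow> real)"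
  unfolding Rmax_def
  by (rule Max_ge[OF finite_subset[where B = "range (\<lambda>(s, a, s'). \<bar>r s a s'\<bar>)"]])
    (auto intro!: image_eqI[where x = "(s, a, s')" for s a s'])

lemma abs_inner_le_Phi_inf: "\<bar>phi s a \<bullet> \<theta>\<bar> \<le> Phi_inf (phi :: 's::finite \<Rightarrow> 'a::finite \<Rightarrow> real^'n) \<theta>"
  unfolding Phi_inf_def
  by (rule Max_ge[OF finite_subset[where B = "range (\<lambda>(s, a). \<bar>phi s a \<bullet> \<theta>\<bar>)"]]) auto

lemma Vtheta_attained: "\<exists>a. Vtheta (phi :: 's \<Rightarrow> 'a::finite \<Rightarrow> real^'n) \<theta> s = phi s a \<bullet> \<theta>"
  unfolding Vtheta_def using Max_in[of "range (\<lambda>a. phi s a \<bullet> \<theta>)"] by (auto simp del: Max_in)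

lemma abs_inner_le_Phi_inf_dist:
  "\<bar>phi s a \<bullet> \<theta>\<bar> \<le> Phi_inf (phi :: 's::finite \<Rightarrow> 'a::finite \<Rightarrow> real^'n) \<theta>' + phimax phi * norm (\<theta> - \<theta>')"
proof -
  have "\<bar>phi s a \<bullet> (\<theta> - \<theta>')\<bar> \<le> norm (phi s a) * norm (\<theta> - \<theta>')"
    by (rule Cauchy_Schwarz_ineq2)
  also have "\<dots> \<le> phimax phi * norm (\<theta> - \<theta>')"
    by (simp add: mult_right_mono norm_le_phimax)
  finally show ?thesis
    using abs_inner_le_Phi_inf[of phi s a \<theta>'] by (simp add: inner_diff_right)
qed

lemma abs_Vtheta_le_Phi_inf_dist:
  "\<bar>Vtheta phi \<theta> s\<bar> \<le> Phi_inf (phi :: 's::finite \<Rightarrow> 'a::finite \<Rightarrow> real^'n) \<theta>' + phimax phi * norm (\<theta> - \<theta>')"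
  using Vtheta_attained[of phi \<theta> s] abs_inner_le_Phi_inf_dist by metis

lemma norm_ghat_le:
  fixes phi :: "'s::finite \<Rightarrow> 'a::finite \<Rightarrow> real^'n"
  assumes "0 \<le> \<gamma>"
  shows "norm (ghat r phi \<gamma> s a s' \<theta>)
    \<le> phimax phi * (Rmax r + (1 + \<gamma>) * (Phi_inf phi \<theta>' + phimax phi * norm (\<theta> - \<theta>')))"
proof -
  define K where "K = Phi_inf phi \<theta>' + phimax phi * norm (\<theta> - \<theta>')"
  have "\<bar>\<gamma> * Vtheta phi \<theta> s'\<bar> \<le> \<gamma> * K"
    unfolding K_def using abs_Vtheta_le_Phi_inf_dist[of phi \<theta> s' \<theta>'] assms
    by (simp add: abs_mult mult_left_mono)
  then have td: "\<bar>r s a s' + \<gamma> * Vtheta phi \<theta> s' - phi s a \<bullet> \<theta>\<bar> \<le> Rmax r + (1 + \<gamma>) * K"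
    using abs_le_Rmax[of r s a s'] abs_inner_le_Phi_inf_dist[of phi s a \<theta> \<theta>']
    unfolding K_def by (simp add: algebra_simps)
  have "norm (ghat r phi \<gamma> s a s' \<theta>) = \<bar>r s a s' + \<gamma> * Vtheta phi \<theta> s' - phi s a \<bullet> \<theta>\<bar> * norm (phi s a)"
    by (simp add: ghat_def)
  also have "\<dots> \<le> (Rmax r + (1 + \<gamma>) * K) * phimax phi"
    by (rule mult_mono'[OF td norm_le_phimax]) simp_all
  finally show ?thesis
    unfolding K_def by (simp add: mult.commute)
qed

lemma gbar_eq_sum_ghat:
  fixes phi :: "'s::finite \<Rightarrow> 'a::finite \<Rightarrow> real^'n"
  assumes "\<forall>s a. (\<Sum>s'\<in>UNIV. P s a s') = 1"
  shows "gbar P r d phi \<gamma> \<theta> = (\<Sum>(s, a, s')\<in>UNIV. (d s a * P s a s') *\<^sub>R ghat r phi \<gamma> s a s' \<theta>)"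
proof -
  have "(\<Sum>s'\<in>UNIV. (d s a * P s a s') *\<^sub>R ghat r phi \<gamma> s a s' \<theta>)
      = (d s a * (Rexp P r s a + \<gamma> * (\<Sum>s'\<in>UNIV. P s a s' * Vtheta phi \<theta> s')
          - (\<Sum>s'\<in>UNIV. P s a s') * (phi s a \<bullet> \<theta>))) *\<^sub>R phi s a" for s a
    unfolding ghat_def Rexp_def
    by (simp add: algebra_simps sum.distrib sum_subtractf sum_distrib_left sum_distrib_right
        flip: scaleR_sum_left)
  then show ?thesis
    using assms unfolding gbar_def by (simp add: sum.cartesian_product' flip: UNIV_Times_UNIV)
qed

lemma norm_gbar_le:
  fixes phi :: "'s::finite \<Rightarrow> 'a::finite \<Rightarrow> real^'n"
  assumes P_nonneg: "\<forall>s a s'. P s a s' \<ge> 0" and P_sum: "\<forall>s a. (\<Sum>s'\<in>UNIV. P s a s') = 1"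
    and d_nonneg: "\<forall>s a. d s a \<ge> 0" and d_sum: "(\<Sum>s\<in>UNIV. \<Sum>a\<in>UNIV. d s a) = 1"
    and "0 \<le> \<gamma>"
  shows "norm (gbar P r d phi \<gamma> \<theta>)
    \<le> phimax phi * (Rmax r + (1 + \<gamma>) * (Phi_inf phi \<theta>' + phimax phi * norm (\<theta> - \<theta>')))"
proof -
  define B where "B = phimax phi * (Rmax r + (1 + \<gamma>) * (Phi_inf phi \<theta>' + phimax phi * norm (\<theta> - \<theta>')))"
  define w where "w = (\<lambda>(s, a, s'). d s a * P s a s')"
  define y where "y = (\<lambda>(s, a, s'). ghat r phi \<gamma> s a s' \<theta>)"
  have "(\<Sum>j\<in>UNIV. w j *\<^sub>R y j) \<in> cball 0 B"
  proof (rule convex_sum)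
    have "sum w UNIV = (\<Sum>s\<in>UNIV. \<Sum>a\<in>UNIV. d s a * (\<Sum>s'\<in>UNIV. P s a s'))"
      by (simp add: w_def sum_distrib_left sum.cartesian_product' flip: UNIV_Times_UNIV)
    then show "sum w UNIV = 1"
      using P_sum d_sum by simp
    show "0 \<le> w j" for j
      using P_nonneg d_nonneg by (simp add: w_def case_prod_unfold)
    show "y j \<in> cball 0 B" for j
      using norm_ghat_le[OF \<open>0 \<le> \<gamma>\<close>] by (simp add: y_def B_def case_prod_unfold)
  qed auto
  then show ?thesis
    unfolding gbar_eq_sum_ghat[OF P_sum] B_def by (simp add: w_def y_def case_prod_unfold)
qed

lemma norm_pnorm_comparison:
  assumes "\<forall>x. (norm x)\<^sup>2 \<le> Vinf P d phi \<alpha> \<gamma> \<beta> x \<and> Vinf P d phi \<alpha> \<gamma> \<beta> x \<le> C * (norm x)\<^sup>2"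
  shows "norm x \<le> pnorm P d phi \<alpha> \<gamma> \<beta> x" and "pnorm P d phi \<alpha> \<gamma> \<beta> x \<le> sqrt C * norm x"
proof -
  show "norm x \<le> pnorm P d phi \<alpha> \<gamma> \<beta> x"
    unfolding pnorm_def using assms real_sqrt_le_mono[of "(norm x)\<^sup>2"] by simp
  show "pnorm P d phi \<alpha> \<gamma> \<beta> x \<le> sqrt C * norm x"
    unfolding pnorm_def using assms real_sqrt_le_mono[of _ "C * (norm x)\<^sup>2"] by (simp add: real_sqrt_mult)
qed

lemma pnorm_sample_noise_le:
  fixes phi :: "'s::finite \<Rightarrow> 'a::finite \<Rightarrow> real^'n"
  assumes P_nonneg: "\<forall>s a s'. P s a s' \<ge> 0" and P_sum: "\<forall>s a. (\<Sum>s'\<in>UNIV. P s a s') = 1"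
    and d_nonneg: "\<forall>s a. d s a \<ge> 0" and d_sum: "(\<Sum>s\<in>UNIV. \<Sum>a\<in>UNIV. d s a) = 1"
    and "0 \<le> \<gamma>" and "0 \<le> C"
    and V_bounds: "\<forall>x. (norm x)\<^sup>2 \<le> Vinf P d phi \<alpha> \<gamma> \<beta> x \<and> Vinf P d phi \<alpha> \<gamma> \<beta> x \<le> C * (norm x)\<^sup>2"
  shows "pnorm P d phi \<alpha> \<gamma> \<beta> (ghat r phi \<gamma> s a s' \<theta> - gbar P r d phi \<gamma> \<theta>)
    \<le> 2 * sqrt C * phimax phi * (Rmax r + (1 + \<gamma>) * Phi_inf phi \<theta>')
      + 2 * sqrt C * (1 + \<gamma>) * (phimax phi)\<^sup>2 * pnorm P d phi \<alpha> \<gamma> \<beta> (\<theta> - \<theta>')"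
proof -
  define B where "B = phimax phi * (Rmax r + (1 + \<gamma>) * (Phi_inf phi \<theta>' + phimax phi * norm (\<theta> - \<theta>')))"
  have "norm (ghat r phi \<gamma> s a s' \<theta> - gbar P r d phi \<gamma> \<theta>) \<le> 2 * B"
    using norm_triangle_ineq4[of "ghat r phi \<gamma> s a s' \<theta>" "gbar P r d phi \<gamma> \<theta>"]
      norm_ghat_le[OF \<open>0 \<le> \<gamma>\<close>, of r phi s a s' \<theta> \<theta>']
      norm_gbar_le[OF P_nonneg P_sum d_nonneg d_sum \<open>0 \<le> \<gamma>\<close>, of r phi \<theta> \<theta>']
    unfolding B_def by linarith
  then have "pnorm P d phi \<alpha> \<gamma> \<beta> (ghat r phi \<gamma> s a s' \<theta> - gbar P r d phi \<gamma> \<theta>) \<le> sqrt C * (2 * B)"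
    using norm_pnorm_comparison(2)[OF V_bounds] \<open>0 \<le> C\<close> by (meson mult_left_mono order_trans real_sqrt_ge_zero)
  also have "\<dots> = 2 * sqrt C * phimax phi * (Rmax r + (1 + \<gamma>) * Phi_inf phi \<theta>')
      + 2 * sqrt C * (1 + \<gamma>) * (phimax phi)\<^sup>2 * norm (\<theta> - \<theta>')"
    unfolding B_def by (simp add: algebra_simps power2_eq_square)
  also have "\<dots> \<le> 2 * sqrt C * phimax phi * (Rmax r + (1 + \<gamma>) * Phi_inf phi \<theta>')
      + 2 * sqrt C * (1 + \<gamma>) * (phimax phi)\<^sup>2 * pnorm P d phi \<alpha> \<gamma> \<beta> (\<theta> - \<theta>')"
    using norm_pnorm_comparison(1)[OF V_bounds] \<open>0 \<le> \<gamma>\<close> \<open>0 \<le> C\<close> by (simp add: mult_left_mono)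
  finally show ?thesis .
qed

lemma (in sigma_finite_subalgebra) real_cond_exp_le_F_meas:
  assumes "AE x in M. f x \<le> g x" "integrable M f" "integrable M g" "g \<in> borel_measurable F"
  shows "AE x in M. real_cond_exp M F f x \<le> g x"
  using real_cond_exp_mono[OF assms(1-3)] real_cond_exp_F_meas[OF assms(3,4)] by eventually_elim simp

lemma (in finite_measure) integrable_fun_of_finite_valued:
  fixes F :: "'x \<Rightarrow> real"
  assumes "H \<in> measurable M (count_space UNIV)" "finite A" "\<And>\<omega>. H \<omega> \<in> A"
  shows "integrable M (\<lambda>\<omega>. F (H \<omega>))"
proof (rule integrable_const_bound[where B = "Max ((\<lambda>x. \<bar>F x\<bar>) ` A)"])
  show "AE \<omega> in M. norm (F (H \<omega>)) \<le> Max ((\<lambda>x. \<bar>F x\<bar>) ` A)"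
    using assms(2,3) by (auto intro!: Max_ge)
  show "(\<lambda>\<omega>. F (H \<omega>)) \<in> borel_measurable M"
    using assms(1) by (rule measurable_compose) simp
qed

definition sample_history ::
    "(nat \<Rightarrow> 'm \<Rightarrow> 's) \<Rightarrow> (nat \<Rightarrow> 'm \<Rightarrow> 'a) \<Rightarrow> (nat \<Rightarrow> 'm \<Rightarrow> 's) \<Rightarrow> nat \<Rightarrow> 'm \<Rightarrow> ('s \<times> 'a \<times> 's) list" where
  "sample_history S Ac S' j \<omega> = map (\<lambda>t. (S t \<omega>, Ac t \<omega>, S' t \<omega>)) [0..<j]"

definition theta_of_history :: "('s \<Rightarrow> 'a \<Rightarrow> 's \<Rightarrow> real) \<Rightarrow> ('s \<Rightarrow> 'a::finite \<Rightarrow> real^'n) \<Rightarrow> real \<Rightarrow> real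
    \<Rightarrow> real^'n \<Rightarrow> ('s \<times> 'a \<times> 's) list \<Rightarrow> real^'n" where
  "theta_of_history r phi \<alpha> \<gamma> \<theta>0 h = fold (\<lambda>(s, a, s') \<theta>. \<theta> + \<alpha> *\<^sub>R ghat r phi \<gamma> s a s' \<theta>) h \<theta>0"

lemma sample_history_Suc:
  "sample_history S Ac S' (Suc j) \<omega> = sample_history S Ac S' j \<omega> @ [(S j \<omega>, Ac j \<omega>, S' j \<omega>)]"
  by (simp add: sample_history_def)

lemma length_sample_history: "length (sample_history S Ac S' j \<omega>) = j"
  by (simp add: sample_history_def)

lemma theta_it_eq_theta_of_history:
  "theta_it r phi \<alpha> \<gamma> \<theta>0 S Ac S' j \<omega> = theta_of_history r phi \<alpha> \<gamma> \<theta>0 (sample_history S Ac S' j \<omega>)"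
  by (induction j) (simp_all add: theta_of_history_def sample_history_def)

lemma sample_history_measurable:
  fixes S S' :: "nat \<Rightarrow> 'm \<Rightarrow> 's::countable" and Ac :: "nat \<Rightarrow> 'm \<Rightarrow> 'a::countable"
  assumes "\<And>t. t < j \<Longrightarrow> (\<lambda>\<omega>. (S t \<omega>, Ac t \<omega>, S' t \<omega>)) \<in> measurable N (count_space UNIV)"
  shows "sample_history S Ac S' j \<in> measurable N (count_space UNIV)"
  using assms
proof (induction j)
  case 0
  then show ?case by (simp add: sample_history_def)
next
  case (Suc j)
  have "(\<lambda>\<omega>. h @ [(S j \<omega>, Ac j \<omega>, S' j \<omega>)]) \<in> measurable N (count_space UNIV)" for h
    using measurable_compose[OF Suc.prems[of j] measurable_count_space[of "\<lambda>x. h @ [x]"]] by simp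
  then show ?case
    unfolding sample_history_Suc[abs_def]
    by (rule measurable_compose_countable'[where I = UNIV]) (use Suc in auto)
qed

lemma (in finite_measure) integrable_fun_of_theta_it_sample:
  fixes S S' :: "nat \<Rightarrow> 'a \<Rightarrow> 's::finite" and Ac :: "nat \<Rightarrow> 'a \<Rightarrow> 'b::finite"
    and G :: "real^'n \<Rightarrow> 's \<times> 'b \<times> 's \<Rightarrow> real"
  assumes "\<forall>t. (\<lambda>\<omega>. (S t \<omega>, Ac t \<omega>, S' t \<omega>)) \<in> measurable M (count_space UNIV)"
  shows "integrable M (\<lambda>\<omega>. G (theta_it r phi \<alpha> \<gamma> \<theta>0 S Ac S' k \<omega>) (S k \<omega>, Ac k \<omega>, S' k \<omega>))"
proof -
  have "integrable M (\<lambda>\<omega>. (\<lambda>h. G (theta_of_history r phi \<alpha> \<gamma> \<theta>0 (butlast h)) (last h))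
      (sample_history S Ac S' (Suc k) \<omega>))"
    using assms finite_lists_length_eq[of "UNIV :: ('s \<times> 'b \<times> 's) set" "Suc k"]
    by (intro integrable_fun_of_finite_valued[where A = "{h. length h = Suc k}"])
      (simp_all add: sample_history_measurable length_sample_history)
  then show ?thesis
    by (simp add: sample_history_Suc theta_it_eq_theta_of_history)
qed

lemma subalgebra_filt:
  assumes "\<forall>t. (\<lambda>\<omega>. (S t \<omega>, Ac t \<omega>, S' t \<omega>)) \<in> measurable M (count_space UNIV)"
  shows "subalgebra M (filt M S Ac S' k)"
proof -
  let ?G = "\<Union>t\<in>{..<k}. {(\<lambda>\<omega>. (S t \<omega>, Ac t \<omega>, S' t \<omega>)) -` B \<inter> space M | B. True}"
  have "?G \<subseteq> sets M"
    using assms by (auto intro: measurable_sets)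
  then show ?thesis
    unfolding subalgebra_def filt_def using sets.sigma_sets_subset[of ?G M]
    by (auto simp: space_measure_of_conv sets_measure_of_conv)
qed

lemma sample_measurable_filt:
  assumes "t < k"
  shows "(\<lambda>\<omega>. (S t \<omega>, Ac t \<omega>, S' t \<omega>)) \<in> measurable (filt M S Ac S' k) (count_space UNIV)"
proof (rule measurableI)
  let ?G = "\<Union>t\<in>{..<k}. {(\<lambda>\<omega>. (S t \<omega>, Ac t \<omega>, S' t \<omega>)) -` B \<inter> space M | B. True}"
  have "?G \<subseteq> Pow (space M)" by auto
  then have space: "space (filt M S Ac S' k) = space M" and sets: "sets (filt M S Ac S' k) = sigma_sets (space M) ?G"
    unfolding filt_def by (simp_all add: space_measure_of_conv)
  fix B
  have "(\<lambda>\<omega>. (S t \<omega>, Ac t \<omega>, S' t \<omega>)) -` B \<inter> space M \<in> ?G"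
    using assms by blast
  then show "(\<lambda>\<omega>. (S t \<omega>, Ac t \<omega>, S' t \<omega>)) -` B \<inter> space (filt M S Ac S' k) \<in> sets (filt M S Ac S' k)"
    unfolding space sets by (rule sigma_sets.Basic)
qed auto

lemma fun_of_theta_it_measurable_filt:
  fixes S S' :: "nat \<Rightarrow> 'm \<Rightarrow> 's::finite" and Ac :: "nat \<Rightarrow> 'm \<Rightarrow> 'a::finite"
    and G :: "real^'n \<Rightarrow> real"
  shows "(\<lambda>\<omega>. G (theta_it r phi \<alpha> \<gamma> \<theta>0 S Ac S' k \<omega>)) \<in> borel_measurable (filt M S Ac S' k)"
  unfolding theta_it_eq_theta_of_history
  by (rule measurable_compose[OF sample_history_measurable[OF sample_measurable_filt]]) simp_all

theorem lemma5:
  fixes P :: "'s::finite \<Rightarrow> 'a::finite \<Rightarrow> 's \<Rightarrow> real"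
    and r :: "'s \<Rightarrow> 'a \<Rightarrow> 's \<Rightarrow> real"
    and d :: "'s \<Rightarrow> 'a \<Rightarrow> real"
    and phi :: "'s \<Rightarrow> 'a \<Rightarrow> real^'n"
    and \<alpha> \<gamma> \<epsilon> C :: real
    and \<theta>0 \<theta>star :: "real^'n"
    and M :: "'m measure"
    and S S' :: "nat \<Rightarrow> 'm \<Rightarrow> 's"
    and Ac :: "nat \<Rightarrow> 'm \<Rightarrow> 'a"
    and k :: nat
  assumes P_nonneg: "\<forall>s a s'. P s a s' \<ge> 0"
    and P_sum: "\<forall>s a. (\<Sum>s'\<in>UNIV. P s a s') = 1"
    and gamma: "0 < \<gamma>" "\<gamma> < 1"
    and alpha: "0 < \<alpha>" "\<alpha> < 1"
    and d_pos: "\<forall>s a. d s a > 0"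
    and d_sum: "(\<Sum>s\<in>UNIV. \<Sum>a\<in>UNIV. d s a) = 1"
    and full_rank: "\<forall>\<theta>. (\<forall>s a. phi s a \<bullet> \<theta> = 0) \<longrightarrow> \<theta> = 0"
    and rho_lt1: "rho_dir P d phi \<alpha> \<gamma> < 1"
    and fixpt: "gbar P r d phi \<gamma> \<theta>star = 0"
    and eps: "\<epsilon> > 0" "rho_dir P d phi \<alpha> \<gamma> + \<epsilon> < 1"
    and C_ge: "C \<ge> 1"
    and C_bounds: "\<forall>x. (norm x)\<^sup>2 \<le> Vinf P d phi \<alpha> \<gamma> (rho_dir P d phi \<alpha> \<gamma> + \<epsilon>) x
                     \<and> Vinf P d phi \<alpha> \<gamma> (rho_dir P d phi \<alpha> \<gamma> + \<epsilon>) x \<le> C * (norm x)\<^sup>2"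
    and M_prob: "prob_space M"
    and meas: "\<forall>t. (\<lambda>\<omega>. (S t \<omega>, Ac t \<omega>, S' t \<omega>)) \<in> measurable M (count_space UNIV)"
    and indep: "prob_space.indep_vars M (\<lambda>_. count_space UNIV) (\<lambda>t \<omega>. (S t \<omega>, Ac t \<omega>, S' t \<omega>)) UNIV"
    and law: "\<forall>t s a s'. measure M {\<omega> \<in> space M. S t \<omega> = s \<and> Ac t \<omega> = a \<and> S' t \<omega> = s'} = d s a * P s a s'"
  shows "AE \<omega> in M.
     real_cond_exp M (filt M S Ac S' k)
       (\<lambda>\<omega>. pnorm P d phi \<alpha> \<gamma> (rho_dir P d phi \<alpha> \<gamma> + \<epsilon>)
          (ghat r phi \<gamma> (S k \<omega>) (Ac k \<omega>) (S' k \<omega>) (theta_it r phi \<alpha> \<gamma> \<theta>0 S Ac S' k \<omega>)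
           - gbar P r d phi \<gamma> (theta_it r phi \<alpha> \<gamma> \<theta>0 S Ac S' k \<omega>))) \<omega>
     \<le> 2 * sqrt C * phimax phi * (Rmax r + (1 + \<gamma>) * Phi_inf phi \<theta>star)
       + 2 * sqrt C * (1 + \<gamma>) * (phimax phi)\<^sup>2
         * pnorm P d phi \<alpha> \<gamma> (rho_dir P d phi \<alpha> \<gamma> + \<epsilon>) (theta_it r phi \<alpha> \<gamma> \<theta>0 S Ac S' k \<omega> - \<theta>star)"
proof -
  interpret prob_space M
    by (rule M_prob)
  interpret finite_measure_subalgebra M "filt M S Ac S' k"
    by unfold_locales (rule subalgebra_filt[OF meas])
  define p where "p = pnorm P d phi \<alpha> \<gamma> (rho_dir P d phi \<alpha> \<gamma> + \<epsilon>)"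
  define noise where "noise \<theta> = (\<lambda>(s, a, s'). p (ghat r phi \<gamma> s a s' \<theta> - gbar P r d phi \<gamma> \<theta>))" for \<theta>
  define bound where "bound \<theta> = 2 * sqrt C * phimax phi * (Rmax r + (1 + \<gamma>) * Phi_inf phi \<theta>star)
    + 2 * sqrt C * (1 + \<gamma>) * (phimax phi)\<^sup>2 * p (\<theta> - \<theta>star)" for \<theta>
  let ?\<theta> = "theta_it r phi \<alpha> \<gamma> \<theta>0 S Ac S' k"
  have "noise \<theta> x \<le> bound \<theta>" for \<theta> x
    unfolding noise_def bound_def p_def
    using pnorm_sample_noise_le[OF P_nonneg P_sum _ d_sum _ _ C_bounds] d_pos gamma C_ge
    by (auto simp: less_imp_le split: prod.splits)
  then have "AE \<omega> in M. real_cond_exp M (filt M S Ac S' k)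
      (\<lambda>\<omega>. noise (?\<theta> \<omega>) (S k \<omega>, Ac k \<omega>, S' k \<omega>)) \<omega> \<le> bound (?\<theta> \<omega>)"
    by (intro real_cond_exp_le_F_meas integrable_fun_of_theta_it_sample[OF meas]
        integrable_fun_of_theta_it_sample[OF meas, where G = "\<lambda>\<theta> _. bound \<theta>"]
        fun_of_theta_it_measurable_filt) simp_all
  then show ?thesis
    by (simp add: noise_def bound_def p_def)
qed

end
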